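(* In the two-principal common agency setting, suppose the cost $c$ is convex and homogeneous of degree $k_c>1$, the utilities $u_{P_1},u_{P_2}$ are concave and homogeneous of degree $k_u$ with $0<k_u<k_c$, and optima are interior with $SW^*_{\mathsf{FB}}>0$. Then $$\frac{SW^*_{\mathsf{LIN}}}{SW^*_{\mathsf{FB}}}=\frac{k_c(2k_c-1)^{-\frac{k_u}{k_c-k_u}}-k_u(2k_c-1)^{-\frac{k_c}{k_c-k_u}}}{k_c-k_u}.$$
   Context: Two principals offer linear contracts $\phi_{P_1},\phi_{P_2}\in\mathbb R^d$ to one agent who chooses $a\in\mathbb R_+^d$ to maximize $\langle\phi_{P_1}+\phi_{P_2},a\rangle-c(a)$; principal $i$'s payoff is $u_{P_i}(a)-\langle\phi_{P_i},a\rangle$. The linear-contract equilibrium action $a^*_{\mathsf{LIN}}$ is the action satisfying $\nabla c(a)=\frac{\nabla u_{P_1}(a)+\nabla u_{P_2}(a)}{2k_c-1}$. First-best social welfare: $SW^*_{\mathsf{FB}}=\max_a\{u_{P_1}(a)+u_{P_2}(a)-c(a)\}$; linear social welfare: $SW^*_{\mathsf{LIN}}=u_{P_1}(a^*_{\mathsf{LIN}})+u_{P_2}(a^*_{\mathsf{LIN}})-c(a^*_{\mathsf{LIN}})$. Homogeneous of degree $k$: $g(\lambda a)=\lambda^kg(a)$ for $\lambda>0$. *)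

theory Defs
  imports "HOL-Analysis.Analysis"
begin

definition orthant :: "(real ^ 'd) set" where
  "orthant = {a. \<forall>i. 0 \<le> a $ i}"

definition pos_orthant :: "(real ^ 'd) set" where
  "pos_orthant = {a. \<forall>i. 0 < a $ i}"

definition homogeneous_on :: "(real ^ 'd) set \<Rightarrow> real \<Rightarrow> (real ^ 'd \<Rightarrow> real) \<Rightarrow> bool" where
  "homogeneous_on S k g \<longleftrightarrow> (\<forall>lam > 0. \<forall>a \<in> S. g (lam *\<^sub>R a) = lam powr k * g a)"

definition has_gradient :: "(real ^ 'd \<Rightarrow> real) \<Rightarrow> real ^ 'd \<Rightarrow> real ^ 'd \<Rightarrow> bool" where
  "has_gradient f g x \<longleftrightarrow> (f has_derivative (\<lambda>h. g \<bullet> h)) (at x)"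

definition SW_FB :: "(real ^ 'd \<Rightarrow> real) \<Rightarrow> (real ^ 'd \<Rightarrow> real) \<Rightarrow> (real ^ 'd \<Rightarrow> real) \<Rightarrow> real" where
  "SW_FB u1 u2 c = (SUP a \<in> orthant. u1 a + u2 a - c a)"

text \<open>Social welfare at an action (used at the linear-contract equilibrium action).\<close>
definition SW_at :: "(real ^ 'd \<Rightarrow> real) \<Rightarrow> (real ^ 'd \<Rightarrow> real) \<Rightarrow> (real ^ 'd \<Rightarrow> real) \<Rightarrow> real ^ 'd \<Rightarrow> real" where
  "SW_at u1 u2 c a = u1 a + u2 a - c a"

end

theory Submission
  imports Defs
begin

(* Euler's identity for homogeneous functions turns the equilibrium condition at a_lin into
   k_c (2 k_c - 1) c(a_lin) = k_u (u_1 + u_2)(a_lin).  Gradients of degree-k homogeneous functions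
   are homogeneous of degree k - 1, so rescaling a_lin by t = (2 k_c - 1)^(1/(k_c - k_u)) turns the
   equilibrium condition into the first-order condition grad c = grad u_1 + grad u_2, and by
   concavity of the welfare this rescaled action is first-best.  Both welfare values are then
   explicit in t, (u_1 + u_2)(a_lin) and c(a_lin), and their ratio is the stated closed form. *)

lemma pos_orthant_subset_interior_orthant: "pos_orthant \<subseteq> interior orthant"
proof (rule interior_maximal)
  show "pos_orthant \<subseteq> orthant"
    unfolding pos_orthant_def orthant_def by (auto intro: less_imp_le)
  have "pos_orthant = (\<Inter>i. {x::real^'d. 0 < x $ i})"
    unfolding pos_orthant_def by auto
  moreover have "open (\<Inter>i. {x::real^'d. 0 < x $ i})"
    by (rule open_INT) (auto intro: open_halfspace_component_gt_cart)
  ultimately show "open (pos_orthant :: (real^'d) set)"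
    by metis
qed

lemma scaleR_mem_pos_orthant: "a \<in> pos_orthant \<Longrightarrow> 0 < t \<Longrightarrow> t *\<^sub>R a \<in> pos_orthant"
  unfolding pos_orthant_def by simp

lemma concave_on_restrict_line:
  assumes "concave_on S f"
  shows "concave_on {s. b + s *\<^sub>R v \<in> S} (\<lambda>s. f (b + s *\<^sub>R v))"
proof -
  have line: "b + (u * x + w * y) *\<^sub>R v = u *\<^sub>R (b + x *\<^sub>R v) + w *\<^sub>R (b + y *\<^sub>R v)"
    if "u + w = 1" for u w x y :: real
    using that by (simp add: algebra_simps flip: scaleR_add_left)
  show ?thesis
    using assms unfolding concave_on_iff convex_def by (simp add: line)
qed

lemma concave_on_imp_below_tangent:
  fixes f :: "'a::real_normed_vector \<Rightarrow> real"
  assumes concave: "concave_on S f" and b: "b \<in> interior S" and x: "x \<in> S"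
    and deriv: "(f has_derivative f') (at b)"
  shows "f x \<le> f b + f' (x - b)"
proof -
  define v where "v = x - b"
  define A where "A = {s. b + s *\<^sub>R v \<in> S}"
  have "convex_on A (\<lambda>s. - f (b + s *\<^sub>R v))"
    using concave_on_restrict_line[OF concave] unfolding A_def concave_on_def .
  moreover from this have "connected A"
    by (simp add: convex_on_imp_convex convex_connected)
  moreover have "0 \<in> interior A"
  proof (rule interiorI)
    show "open ((\<lambda>s. b + s *\<^sub>R v) -` interior S)"
      by (intro continuous_open_vimage open_interior) (auto intro!: continuous_intros)
    show "(\<lambda>s. b + s *\<^sub>R v) -` interior S \<subseteq> A"
      unfolding A_def using interior_subset by blast
  qed (use b in simp)
  moreover have "1 \<in> A"
    using x unfolding A_def v_def by simp
  moreover have "((\<lambda>s. - f (b + s *\<^sub>R v)) has_field_derivative - f' v) (at 0 within A)"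
  proof -
    have "((\<lambda>s. b + s *\<^sub>R v) has_derivative (\<lambda>s. s *\<^sub>R v)) (at 0)"
      by (auto intro!: derivative_eq_intros)
    then have "((\<lambda>s. f (b + s *\<^sub>R v)) has_derivative (\<lambda>s. f' (s *\<^sub>R v))) (at 0)"
      using has_derivative_compose[of "\<lambda>s. b + s *\<^sub>R v" _ 0 UNIV f f'] deriv by (simp add: o_def)
    moreover have "(\<lambda>s. f' (s *\<^sub>R v)) = (\<lambda>s. f' v * s)"
      using linear_scale[OF has_derivative_linear[OF deriv]] by (simp add: fun_eq_iff)
    ultimately have "((\<lambda>s. f (b + s *\<^sub>R v)) has_field_derivative f' v) (at 0)"
      unfolding has_field_derivative_def by simp
    then show ?thesis
      using DERIV_minus has_field_derivative_at_within by blast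
  qed
  ultimately have "- f' v * (1 - 0) \<le> - f (b + 1 *\<^sub>R v) - - f (b + 0 *\<^sub>R v)"
    by (rule convex_on_imp_above_tangent)
  then show ?thesis
    unfolding v_def by simp
qed

lemma homogeneous_on_Euler:
  fixes f :: "real^'d \<Rightarrow> real"
  assumes hom: "homogeneous_on S k f" and a: "a \<in> S" and grad: "has_gradient f g a"
  shows "g \<bullet> a = k * f a"
proof -
  have scaled: "((\<lambda>l. f (l *\<^sub>R a)) has_derivative (\<lambda>l. g \<bullet> (l *\<^sub>R a))) (at 1)"
    using grad unfolding has_gradient_def
    by (intro has_derivative_compose[where f="\<lambda>l. l *\<^sub>R a" and g=f, simplified]
        has_derivative_scaleR_left has_derivative_ident) simp_all
  have "f (l *\<^sub>R a) = l powr k * f a" if "l \<in> {0<..}" for l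
    using hom a that unfolding homogeneous_on_def by simp
  then have "((\<lambda>l. l powr k * f a) has_derivative (\<lambda>l. g \<bullet> (l *\<^sub>R a))) (at 1)"
    by (intro has_derivative_transform_within_open[OF scaled open_greaterThan]) auto
  then have "((\<lambda>l. l powr k * f a) has_field_derivative g \<bullet> a) (at 1)"
    unfolding has_field_derivative_def by (rule has_derivative_eq_rhs) (auto simp: fun_eq_iff)
  moreover have "((\<lambda>l. l powr k * f a) has_field_derivative k * 1 powr (k - 1) * f a) (at 1)"
    by (auto intro!: derivative_eq_intros)
  ultimately show ?thesis
    by (simp add: DERIV_unique)
qed

lemma homogeneous_on_gradient_scaleR:
  fixes f :: "real^'d \<Rightarrow> real"
  assumes hom: "homogeneous_on S k f" and a: "a \<in> interior S" and t: "0 < t"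
    and grad: "has_gradient f g a" and grad_scaled: "has_gradient f g' (t *\<^sub>R a)"
  shows "g' = t powr (k - 1) *\<^sub>R g"
proof -
  have scaled: "((\<lambda>x. f (t *\<^sub>R x)) has_derivative (\<lambda>h. g' \<bullet> (t *\<^sub>R h))) (at a)"
    using grad_scaled unfolding has_gradient_def
    by (intro has_derivative_compose[where f="\<lambda>x. t *\<^sub>R x" and g=f, simplified]
        has_derivative_scaleR_right has_derivative_ident) simp_all
  have "f (t *\<^sub>R x) = t powr k * f x" if "x \<in> interior S" for x
    using hom t that interior_subset unfolding homogeneous_on_def by blast
  then have "((\<lambda>x. t powr k * f x) has_derivative (\<lambda>h. g' \<bullet> (t *\<^sub>R h))) (at a)"
    by (intro has_derivative_transform_within_open[OF scaled open_interior a]) auto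
  moreover have "((\<lambda>x. t powr k * f x) has_derivative (\<lambda>h. t powr k * (g \<bullet> h))) (at a)"
    using grad unfolding has_gradient_def by (rule has_derivative_mult_right)
  ultimately have "\<forall>h. (t *\<^sub>R g') \<bullet> h = (t powr k *\<^sub>R g) \<bullet> h"
    by (metis has_derivative_unique inner_scaleR_left inner_scaleR_right)
  then have "t *\<^sub>R g' = t powr k *\<^sub>R g"
    by (simp only: vector_eq_rdot)
  moreover have "t powr k = t * t powr (k - 1)"
    using t by (simp add: powr_mult_base)
  ultimately have "t *\<^sub>R g' = t *\<^sub>R (t powr (k - 1) *\<^sub>R g)"
    by simp
  then show ?thesis
    using t by (simp only: scaleR_cancel_left) simp
qed

lemma homogeneous_gradient_equation_Euler:
  fixes c u1 u2 :: "real^'d \<Rightarrow> real"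
  assumes c_hom: "homogeneous_on S kc c"
    and u1_hom: "homogeneous_on S ku u1" and u2_hom: "homogeneous_on S ku u2" and a: "a \<in> S"
    and c_grad: "has_gradient c gc a"
    and u1_grad: "has_gradient u1 gu1 a" and u2_grad: "has_gradient u2 gu2 a"
    and m: "m \<noteq> 0" and eq: "gc = (1 / m) *\<^sub>R (gu1 + gu2)"
  shows "kc * m * c a = ku * (u1 a + u2 a)"
proof -
  have "gc \<bullet> a = (1 / m) * (gu1 \<bullet> a + gu2 \<bullet> a)"
    using eq by (simp add: inner_add_left)
  then show ?thesis
    using homogeneous_on_Euler[OF c_hom a c_grad] homogeneous_on_Euler[OF u1_hom a u1_grad]
      homogeneous_on_Euler[OF u2_hom a u2_grad] m
    by (simp add: field_simps)
qed

lemma SW_FB_eq_SW_at_stationary: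
  fixes c u1 u2 :: "real^'d \<Rightarrow> real"
  assumes u1: "concave_on orthant u1" and u2: "concave_on orthant u2" and c: "convex_on orthant c"
    and b: "b \<in> pos_orthant"
    and grad_u1: "has_gradient u1 g1 b" and grad_u2: "has_gradient u2 g2 b"
    and grad_c: "has_gradient c g b" and stationary: "g = g1 + g2"
  shows "SW_FB u1 u2 c = SW_at u1 u2 c b"
proof -
  have concave: "concave_on orthant (\<lambda>x. u1 x + u2 x - c x)"
    using u1 u2 c by (intro concave_on_diff concave_on_add)
  have deriv: "((\<lambda>x. u1 x + u2 x - c x) has_derivative (\<lambda>h. g1 \<bullet> h + g2 \<bullet> h - g \<bullet> h)) (at b)"
    using grad_u1 grad_u2 grad_c unfolding has_gradient_def
    by (intro has_derivative_diff has_derivative_add)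
  have b_interior: "b \<in> interior orthant"
    using b pos_orthant_subset_interior_orthant by blast
  have "SW_at u1 u2 c x \<le> SW_at u1 u2 c b" if "x \<in> orthant" for x
    using concave_on_imp_below_tangent[OF concave b_interior that deriv]
    by (simp add: SW_at_def stationary inner_add_left)
  moreover have "b \<in> orthant"
    using b_interior interior_subset by blast
  ultimately show ?thesis
    unfolding SW_FB_def by (intro cSup_eq_maximum) (auto simp: SW_at_def)
qed

lemma homogeneous_gradient_equation_rescale:
  fixes c u1 u2 :: "real^'d \<Rightarrow> real"
  assumes c_hom: "homogeneous_on orthant kc c"
    and u1_hom: "homogeneous_on orthant ku u1" and u2_hom: "homogeneous_on orthant ku u2"
    and c_grad: "\<And>a. a \<in> pos_orthant \<Longrightarrow> has_gradient c (gc a) a"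
    and u1_grad: "\<And>a. a \<in> pos_orthant \<Longrightarrow> has_gradient u1 (gu1 a) a"
    and u2_grad: "\<And>a. a \<in> pos_orthant \<Longrightarrow> has_gradient u2 (gu2 a) a"
    and a: "a \<in> pos_orthant" and m: "0 < m" and k: "ku \<noteq> kc"
    and eq: "gc a = (1 / m) *\<^sub>R (gu1 a + gu2 a)"
  defines "b \<equiv> m powr (1 / (kc - ku)) *\<^sub>R a"
  shows "gc b = gu1 b + gu2 b"
proof -
  define t where "t = m powr (1 / (kc - ku))"
  have t: "0 < t"
    using m by (simp add: t_def)
  have b_eq: "b = t *\<^sub>R a" and b_pos: "t *\<^sub>R a \<in> pos_orthant"
    using a t by (simp_all add: b_def t_def scaleR_mem_pos_orthant)
  have a_interior: "a \<in> interior orthant"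
    using a pos_orthant_subset_interior_orthant by blast
  have gc_b: "gc b = t powr (kc - 1) *\<^sub>R gc a"
    unfolding b_eq by (rule homogeneous_on_gradient_scaleR[OF c_hom a_interior t c_grad[OF a] c_grad[OF b_pos]])
  have gu1_b: "gu1 b = t powr (ku - 1) *\<^sub>R gu1 a"
    unfolding b_eq by (rule homogeneous_on_gradient_scaleR[OF u1_hom a_interior t u1_grad[OF a] u1_grad[OF b_pos]])
  have gu2_b: "gu2 b = t powr (ku - 1) *\<^sub>R gu2 a"
    unfolding b_eq by (rule homogeneous_on_gradient_scaleR[OF u2_hom a_interior t u2_grad[OF a] u2_grad[OF b_pos]])
  have "t powr (kc - 1) = t powr (ku - 1) * t powr (kc - ku)"
    by (simp flip: powr_add)
  also have "t powr (kc - ku) = m"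
    using m k by (simp add: t_def powr_powr)
  finally have "t powr (kc - 1) / m = t powr (ku - 1)"
    using m by simp
  moreover have "gc b = (t powr (kc - 1) / m) *\<^sub>R (gu1 a + gu2 a)"
    using gc_b eq by simp
  ultimately show ?thesis
    using gu1_b gu2_b by (simp add: scaleR_add_right)
qed

lemma welfare_ratio_closed_form:
  fixes U C m kc ku :: real
  assumes k: "0 < ku" "ku < kc" and m: "0 < m" and U: "U \<noteq> 0"
    and euler: "kc * m * C = ku * U"
  defines "t \<equiv> m powr (1 / (kc - ku))"
  shows "(U - C) / (t powr ku * U - t powr kc * C) =
           (kc * m powr (- ku / (kc - ku)) - ku * m powr (- kc / (kc - ku))) / (kc - ku)"
proof -
  define p where "p = m powr (ku / (kc - ku))"
  have p: "0 < p"
    using m by (simp add: p_def)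
  have "kc / (kc - ku) = ku / (kc - ku) + 1"
    using k by (simp add: field_simps)
  then have m_kc: "m powr (kc / (kc - ku)) = p * m"
    using m by (simp add: p_def powr_add)
  have t_ku: "t powr ku = p" and t_kc: "t powr kc = p * m"
    using m m_kc by (simp_all add: t_def p_def powr_powr)
  have m_neg_ku: "m powr (- ku / (kc - ku)) = 1 / p"
    using m by (simp add: p_def powr_minus divide_inverse)
  have m_neg_kc: "m powr (- kc / (kc - ku)) = 1 / (p * m)"
    using m m_kc by (simp add: powr_minus divide_inverse)
  have num: "U - C = U * (kc * m - ku) / (kc * m)" and den: "p * U - p * m * C = p * U * (kc - ku) / kc"
    using euler k m by (simp_all add: field_simps)
  have "(U - C) / (t powr ku * U - t powr kc * C) = (kc * m - ku) / (p * m * (kc - ku))"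
    unfolding t_ku t_kc num den using k m p U by (simp add: field_simps)
  also have "\<dots> = (kc * (1 / p) - ku * (1 / (p * m))) / (kc - ku)"
    using k m p by (simp add: field_simps)
  finally show ?thesis
    unfolding m_neg_ku m_neg_kc .
qed

theorem mainTheorem11:
  fixes c u1 u2 :: "real ^ 'd \<Rightarrow> real"
    and gc gu1 gu2 :: "real ^ 'd \<Rightarrow> real ^ 'd"
    and kc ku :: real
    and a_lin :: "real ^ 'd"
  assumes kc: "kc > 1"
    and ku: "0 < ku" "ku < kc"
    and c_convex: "convex_on orthant c"
    and u1_concave: "concave_on orthant u1"
    and u2_concave: "concave_on orthant u2"
    and c_hom: "homogeneous_on orthant kc c"
    and u1_hom: "homogeneous_on orthant ku u1"
    and u2_hom: "homogeneous_on orthant ku u2"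
    and c_grad: "\<And>a. a \<in> pos_orthant \<Longrightarrow> has_gradient c (gc a) a"
    and u1_grad: "\<And>a. a \<in> pos_orthant \<Longrightarrow> has_gradient u1 (gu1 a) a"
    and u2_grad: "\<And>a. a \<in> pos_orthant \<Longrightarrow> has_gradient u2 (gu2 a) a"
    and fb_interior: "\<exists>a_fb \<in> pos_orthant. \<forall>a \<in> orthant.
                        u1 a + u2 a - c a \<le> u1 a_fb + u2 a_fb - c a_fb"
    and lin_interior: "a_lin \<in> pos_orthant"
    and lin_eq: "gc a_lin = (1 / (2 * kc - 1)) *\<^sub>R (gu1 a_lin + gu2 a_lin)"
    and fb_pos: "SW_FB u1 u2 c > 0"
  shows "SW_at u1 u2 c a_lin / SW_FB u1 u2 c =
           (kc * (2 * kc - 1) powr (- ku / (kc - ku))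
             - ku * (2 * kc - 1) powr (- kc / (kc - ku))) / (kc - ku)"
proof -
  define m where "m = 2 * kc - 1"
  define t where "t = m powr (1 / (kc - ku))"
  define U where "U = u1 a_lin + u2 a_lin"
  have m: "0 < m"
    using kc by (simp add: m_def)
  have a_lin: "a_lin \<in> orthant"
    using lin_interior pos_orthant_subset_interior_orthant interior_subset by blast
  have euler: "kc * m * c a_lin = ku * U"
    unfolding U_def using m lin_eq unfolding m_def
    by (intro homogeneous_gradient_equation_Euler[OF c_hom u1_hom u2_hom a_lin
          c_grad[OF lin_interior] u1_grad[OF lin_interior] u2_grad[OF lin_interior]]) auto
  have stationary: "gc (t *\<^sub>R a_lin) = gu1 (t *\<^sub>R a_lin) + gu2 (t *\<^sub>R a_lin)"
    unfolding t_def using ku m lin_eq unfolding m_def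
    by (intro homogeneous_gradient_equation_rescale[OF c_hom u1_hom u2_hom c_grad u1_grad u2_grad lin_interior]) auto
  have "0 < t"
    using m by (simp add: t_def)
  then have "SW_FB u1 u2 c = t powr ku * U - t powr kc * c a_lin"
    using SW_FB_eq_SW_at_stationary[OF u1_concave u2_concave c_convex _ u1_grad u2_grad c_grad stationary]
      scaleR_mem_pos_orthant[OF lin_interior] u1_hom u2_hom c_hom a_lin
    by (simp add: SW_at_def homogeneous_on_def U_def algebra_simps)
  moreover have "U \<noteq> 0"
    using fb_pos euler calculation kc m by auto
  ultimately show ?thesis
    using welfare_ratio_closed_form[OF ku m _ euler]
    by (simp add: SW_at_def U_def t_def m_def)
qed

end
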